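(* Every 3-colourable finite graph is 101-colourable.
   Context: A finite simple undirected graph is 101-colourable if there is an assignment of a value in $\{0,1\}$ to each vertex such that (i) no two adjacent vertices are both assigned $0$, and (ii) no triangle (3-clique) has all three vertices assigned $1$. *)

theory Defs
  imports Main
begin

definition simple_graph :: "'a set \<Rightarrow> ('a \<Rightarrow> 'a \<Rightarrow> bool) \<Rightarrow> bool" where
  "simple_graph V E \<longleftrightarrow> finite V \<and> (\<forall>x y. E x y \<longrightarrow> E y x) \<and> (\<forall>x. \<not> E x x)
     \<and> (\<forall>x y. E x y \<longrightarrow> x \<in> V \<and> y \<in> V)"

definition colourable :: "nat \<Rightarrow> 'a set \<Rightarrow> ('a \<Rightarrow> 'a \<Rightarrow> bool) \<Rightarrow> bool" where
  "colourable k V E \<longleftrightarrow> (\<exists>c :: 'a \<Rightarrow> nat. (\<forall>v\<in>V. c v < k) \<and>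
      (\<forall>x\<in>V. \<forall>y\<in>V. E x y \<longrightarrow> c x \<noteq> c y))"

text \<open>101-colourable: a 0/1 assignment with no edge both 0 and no triangle all 1.\<close>
definition colourable_101 :: "'a set \<Rightarrow> ('a \<Rightarrow> 'a \<Rightarrow> bool) \<Rightarrow> bool" where
  "colourable_101 V E \<longleftrightarrow> (\<exists>f :: 'a \<Rightarrow> bool.
      (\<forall>x\<in>V. \<forall>y\<in>V. E x y \<longrightarrow> f x \<or> f y) \<and>
      (\<forall>x\<in>V. \<forall>y\<in>V. \<forall>z\<in>V. E x y \<and> E y z \<and> E x z \<longrightarrow> \<not> (f x \<and> f y \<and> f z)))"

end

theory Submission
  imports Defs
begin

(* A 101-colouring is the same thing as an independent set of vertices (the vertices
   coloured 0) that meets every triangle: condition (i) says the 0-class is independent,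
   condition (ii) says every triangle has a vertex coloured 0.  Given a proper 3-colouring,
   any single colour class is independent, and since the three vertices of a triangle are
   pairwise adjacent they receive three distinct colours out of three, so every triangle
   meets every colour class.  Hence colour class 0 is the required set. *)

definition independent :: "('a \<Rightarrow> 'a \<Rightarrow> bool) \<Rightarrow> 'a set \<Rightarrow> bool" where
  "independent E S \<longleftrightarrow> (\<forall>x\<in>S. \<forall>y\<in>S. \<not> E x y)"

definition triangle :: "'a set \<Rightarrow> ('a \<Rightarrow> 'a \<Rightarrow> bool) \<Rightarrow> 'a \<Rightarrow> 'a \<Rightarrow> 'a \<Rightarrow> bool" where
  "triangle V E x y z \<longleftrightarrow> x \<in> V \<and> y \<in> V \<and> z \<in> V \<and> E x y \<and> E y z \<and> E x z"

definition hits_all_triangles :: "'a set \<Rightarrow> ('a \<Rightarrow> 'a \<Rightarrow> bool) \<Rightarrow> 'a set \<Rightarrow> bool" where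
  "hits_all_triangles V E S \<longleftrightarrow>
     (\<forall>x y z. triangle V E x y z \<longrightarrow> x \<in> S \<or> y \<in> S \<or> z \<in> S)"

lemma colourable_101_if_independent_transversal:
  assumes "independent E S" and "hits_all_triangles V E S"
  shows "colourable_101 V E"
  unfolding colourable_101_def
proof (rule exI[of _ "\<lambda>v. v \<notin> S"], intro conjI ballI impI)
  fix x y assume "E x y"
  then show "x \<notin> S \<or> y \<notin> S"
    using assms(1) unfolding independent_def by blast
next
  fix x y z assume "x \<in> V" "y \<in> V" "z \<in> V" "E x y \<and> E y z \<and> E x z"
  then have "triangle V E x y z" unfolding triangle_def by blast
  then show "\<not> (x \<notin> S \<and> y \<notin> S \<and> z \<notin> S)"
    using assms(2) unfolding hits_all_triangles_def by blast
qed

lemma colour_class_independent: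
  assumes proper: "\<forall>x\<in>V. \<forall>y\<in>V. E x y \<longrightarrow> c x \<noteq> c y"
  shows "independent E {v \<in> V. c v = i}"
  using proper unfolding independent_def by fastforce

lemma triangle_meets_colour_class:
  fixes c :: "'a \<Rightarrow> nat"
  assumes range: "\<forall>v\<in>V. c v < 3"
    and proper: "\<forall>x\<in>V. \<forall>y\<in>V. E x y \<longrightarrow> c x \<noteq> c y"
    and "i < 3"
  shows "hits_all_triangles V E {v \<in> V. c v = i}"
  unfolding hits_all_triangles_def
proof (intro allI impI)
  fix x y z assume "triangle V E x y z"
  then have in_V: "x \<in> V" "y \<in> V" "z \<in> V"
    and distinct: "c x \<noteq> c y" "c y \<noteq> c z" "c x \<noteq> c z"
    using proper unfolding triangle_def by auto
  have "c x < 3" "c y < 3" "c z < 3" using range in_V by auto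
  with distinct \<open>i < 3\<close> have "c x = i \<or> c y = i \<or> c z = i" by linarith
  with in_V show "x \<in> {v \<in> V. c v = i} \<or> y \<in> {v \<in> V. c v = i} \<or> z \<in> {v \<in> V. c v = i}"
    by blast
qed

theorem mainTheorem3:
  fixes V :: "'a set" and E :: "'a \<Rightarrow> 'a \<Rightarrow> bool"
  assumes "simple_graph V E"
    and "colourable 3 V E"
  shows "colourable_101 V E"
proof -
  obtain c :: "'a \<Rightarrow> nat" where
    range: "\<forall>v\<in>V. c v < 3" and proper: "\<forall>x\<in>V. \<forall>y\<in>V. E x y \<longrightarrow> c x \<noteq> c y"
    using assms(2) unfolding colourable_def by blast
  let ?S = "{v \<in> V. c v = 0}"
  have "independent E ?S"
    using colour_class_independent[OF proper] .
  moreover have "hits_all_triangles V E ?S"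
    using triangle_meets_colour_class[OF range proper] by simp
  ultimately show ?thesis
    by (rule colourable_101_if_independent_transversal)
qed

end
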